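(* Let $n\ge1$, let $\mathbf u(z),\mathbf v(z)\in\mathbb R^n$ be column vector functions, and let $A$ be a constant real skew-symmetric $n\times n$ matrix. Define the block matrices of block size $(1,n,1)\times(1,n,1)$ \[ {\cal B}_0=\begin{pmatrix} -1 & 0 & 0\\ 0 & 0 & 0\\ 0 & 0 & 1 \end{pmatrix},\quad {\cal B}_1=\begin{pmatrix} 0 & -\mathbf v^T & 0\\ \mathbf u & 0 & -\mathbf v\\ 0 & \mathbf u^T & 0 \end{pmatrix},\quad {\cal B}_2=\begin{pmatrix} -(\mathbf u,\mathbf v) & (\mathbf v')^T & 0\\ \mathbf u' & \mathbf u\mathbf v^T-\mathbf v\mathbf u^T+A & \mathbf v'\\ 0 & (\mathbf u')^T & (\mathbf u,\mathbf v) \end{pmatrix}, \] and ${\cal B}=\zeta{\cal B}_0+{\cal B}_1$. Then: (a) The system \[ \mathbf u''+2(\mathbf u,\mathbf v)\mathbf u-(\mathbf u,\mathbf u)\mathbf v+\tfrac12 z\mathbf u+A\mathbf u=0,\qquad \mathbf v''+2(\mathbf u,\mathbf v)\mathbf v-(\mathbf v,\mathbf v)\mathbf u+\tfrac12 z\mathbf v-A\mathbf v=0 \] admits the isomonodromic Lax representation ${\cal A}'={\cal B}_\zeta+[{\cal B},{\cal A}]$ with ${\cal A}=(2\zeta^2+z){\cal B}_0+2\zeta{\cal B}_1+2{\cal B}_2$. (b) The system \[ \mathbf u''+2(\mathbf u,\mathbf v)\mathbf u-(\mathbf u,\mathbf u)\mathbf v+\tfrac12 (z\mathbf u)'+A\mathbf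 u=0,\qquad \mathbf v''+2(\mathbf u,\mathbf v)\mathbf v-(\mathbf v,\mathbf v)\mathbf u-\tfrac12 (z\mathbf v)'-A\mathbf v=0 \] admits the isomonodromic Lax representation ${\cal A}'={\cal B}_\zeta+[{\cal B},{\cal A}]$ with ${\cal A}=(2+z\zeta^{-1})(\zeta{\cal B}_0+{\cal B}_1)+2\zeta^{-1}{\cal B}_2$.
   Context: Primes denote derivatives with respect to $z$; $\zeta$ is a spectral parameter independent of $z$; $(\cdot,\cdot)$ is the standard scalar product on $\mathbb R^n$. "Admits the Lax representation" means the matrix equation holds identically in $\zeta$ by virtue of the system. *)

theory Defs
  imports "HOL-Analysis.Analysis"
begin

text \<open>Block index set of size 1 + n + 1: the first row/column (Top),
  the middle block indexed by 'n (Mid i), and the last row/column (Bot).\<close>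
datatype 'n bidx = Top | Mid 'n | Bot

lemma UNIV_bidx: "(UNIV :: 'a bidx set) = insert Top (insert Bot (range Mid))"
  by (auto, case_tac x, auto)

instance bidx :: (finite) finite
  by standard (simp add: UNIV_bidx)

type_synonym 'n bmat = "complex ^ 'n bidx ^ 'n bidx"

definition B0 :: "('n::finite) bmat" where
  "B0 = (\<chi> i j. if i = j then (case i of Top \<Rightarrow> -1 | Mid _ \<Rightarrow> 0 | Bot \<Rightarrow> 1) else 0)"

definition B1 :: "real ^ ('n::finite) \<Rightarrow> real ^ 'n \<Rightarrow> 'n bmat" where
  "B1 a b = (\<chi> i j. case (i, j) of
      (Top, Mid k) \<Rightarrow> complex_of_real (- (b $ k))
    | (Mid k, Top) \<Rightarrow> complex_of_real (a $ k)
    | (Mid k, Bot) \<Rightarrow> complex_of_real (- (b $ k))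
    | (Bot, Mid k) \<Rightarrow> complex_of_real (a $ k)
    | _ \<Rightarrow> 0)"

text \<open>B2 a b a' b' M, where a' and b' stand for the z-derivatives of a and b.\<close>
definition B2 :: "real ^ ('n::finite) \<Rightarrow> real ^ 'n \<Rightarrow> real ^ 'n \<Rightarrow> real ^ 'n
    \<Rightarrow> real ^ 'n ^ 'n \<Rightarrow> 'n bmat" where
  "B2 a b a' b' M = (\<chi> i j. case (i, j) of
      (Top, Top) \<Rightarrow> complex_of_real (- (a \<bullet> b))
    | (Top, Mid k) \<Rightarrow> complex_of_real (b' $ k)
    | (Mid k, Top) \<Rightarrow> complex_of_real (a' $ k)
    | (Mid k, Mid l) \<Rightarrow> complex_of_real (a $ k * b $ l - b $ k * a $ l + M $ k $ l)
    | (Mid k, Bot) \<Rightarrow> complex_of_real (b' $ k)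
    | (Bot, Mid k) \<Rightarrow> complex_of_real (a' $ k)
    | (Bot, Bot) \<Rightarrow> complex_of_real (a \<bullet> b)
    | _ \<Rightarrow> 0)"

definition mscale :: "complex \<Rightarrow> ('n::finite) bmat \<Rightarrow> 'n bmat" (infixr "*m" 75) where
  "c *m M = (\<chi> i j. c * M $ i $ j)"

definition commutator :: "('n::finite) bmat \<Rightarrow> 'n bmat \<Rightarrow> 'n bmat" where
  "commutator X Y = X ** Y - Y ** X"

end

theory Submission
  imports Defs
begin

(* Expanding both sides of the Lax equation in powers of \<zeta>, everything reduces to two
   identities between the block matrices. The first is purely algebraic: [B0, B2] = B1 u' v'.
   The second holds along arbitrary curves u, v: the derivative of B2 is [B1, B2] + B1 r (- s),
   where r = u'' + cubic_part u v A and s = v'' + cubic_part v u (- A) are the left-hand sides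
   of the two equations without their z-dependent terms; skew-symmetry of A enters only here,
   in computing [B1, B2]. Along solutions r and s are minus those z-dependent terms, and the
   resulting B1-term cancels the leftover - z [B0, B1] of system (a), respectively
   B1 u v + z B1 u' v' of system (b). *)

definition cubic_part :: "real ^ ('n::finite) \<Rightarrow> real ^ 'n \<Rightarrow> real ^ 'n ^ 'n \<Rightarrow> real ^ 'n" where
  "cubic_part a b M = (2 * (a \<bullet> b)) *\<^sub>R a - (a \<bullet> a) *\<^sub>R b + M *v a"

lemma all_bidx: "(\<forall>i. P i) \<longleftrightarrow> P Top \<and> P Bot \<and> (\<forall>k. P (Mid k))"
  by (metis bidx.exhaust)

lemma sum_UNIV_bidx:
  fixes f :: "('n::finite) bidx \<Rightarrow> 'b::comm_monoid_add"
  shows "(\<Sum>i\<in>UNIV. f i) = f Top + f Bot + (\<Sum>k\<in>UNIV. f (Mid k))"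
proof -
  have "(\<Sum>i\<in>UNIV. f i) = f Top + (f Bot + sum f (range Mid))"
    by (simp add: UNIV_bidx image_iff)
  also have "sum f (range Mid) = (\<Sum>k\<in>UNIV. f (Mid k))"
    by (simp add: sum.reindex inj_on_def)
  finally show ?thesis
    by (simp add: add.assoc)
qed

lemma matrix_matrix_mult_bidx_nth:
  fixes X Y :: "'a::comm_semiring_1 ^ ('n::finite) bidx ^ 'n bidx"
  shows "(X ** Y) $ i $ j = X $ i $ Top * Y $ Top $ j + X $ i $ Bot * Y $ Bot $ j
    + (\<Sum>k\<in>UNIV. X $ i $ Mid k * Y $ Mid k $ j)"
  by (simp add: matrix_matrix_mult_def sum_UNIV_bidx)

lemma B0_nth [simp]:
  "B0 $ Top $ Top = -1" "B0 $ Bot $ Bot = 1" "B0 $ Top $ Bot = 0" "B0 $ Bot $ Top = 0"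
  "B0 $ Mid k $ j = 0" "B0 $ i $ Mid k = 0"
  by (auto simp: B0_def split: bidx.splits)

lemma B1_nth [simp]:
  "B1 a b $ Top $ Top = 0" "B1 a b $ Bot $ Bot = 0" "B1 a b $ Top $ Bot = 0" "B1 a b $ Bot $ Top = 0"
  "B1 a b $ Mid k $ Mid l = 0"
  "B1 a b $ Top $ Mid k = - of_real (b $ k)" "B1 a b $ Mid k $ Top = of_real (a $ k)"
  "B1 a b $ Mid k $ Bot = - of_real (b $ k)" "B1 a b $ Bot $ Mid k = of_real (a $ k)"
  by (auto simp: B1_def)

lemma B2_nth [simp]:
  "B2 a b a' b' M $ Top $ Top = - of_real (a \<bullet> b)" "B2 a b a' b' M $ Bot $ Bot = of_real (a \<bullet> b)"
  "B2 a b a' b' M $ Top $ Bot = 0" "B2 a b a' b' M $ Bot $ Top = 0"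
  "B2 a b a' b' M $ Mid k $ Mid l = of_real (a $ k * b $ l - b $ k * a $ l + M $ k $ l)"
  "B2 a b a' b' M $ Top $ Mid k = of_real (b' $ k)" "B2 a b a' b' M $ Mid k $ Top = of_real (a' $ k)"
  "B2 a b a' b' M $ Mid k $ Bot = of_real (b' $ k)" "B2 a b a' b' M $ Bot $ Mid k = of_real (a' $ k)"
  by (auto simp: B2_def)

lemma mscale_nth [simp]: "(c *m M) $ i $ j = c * M $ i $ j"
  by (simp add: mscale_def)

lemma matrix_vector_mult_uminus:
  fixes M :: "'a::ring_1 ^ 'n ^ 'm"
  shows "(- M) *v x = - (M *v x)"
  using matrix_vector_mult_diff_rdistrib[of 0 M x] by simp

lemma commutator_add_left: "commutator (X + Y) Z = commutator X Z + commutator Y Z"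
  by (simp add: commutator_def vec_eq_iff matrix_matrix_mult_def algebra_simps sum.distrib)

lemma commutator_add_right: "commutator X (Y + Z) = commutator X Y + commutator X Z"
  by (simp add: commutator_def vec_eq_iff matrix_matrix_mult_def algebra_simps sum.distrib)

lemma commutator_mscale_left: "commutator (c *m X) Y = c *m commutator X Y"
  by (simp add: commutator_def vec_eq_iff matrix_matrix_mult_def algebra_simps sum_distrib_left)

lemma commutator_mscale_right: "commutator X (c *m Y) = c *m commutator X Y"
  by (simp add: commutator_def vec_eq_iff matrix_matrix_mult_def algebra_simps sum_distrib_left)

lemmas commutator_bilinear =
  commutator_add_left commutator_add_right commutator_mscale_left commutator_mscale_right

lemma commutator_self: "commutator X X = 0"
  by (simp add: commutator_def)

lemma commutator_antisym: "commutator Y X = - commutator X Y"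
  by (simp add: commutator_def)

lemma commutator_B0_B1: "commutator B0 (B1 a b) = B1 a (- b)"
  by (simp add: commutator_def vec_eq_iff all_bidx matrix_matrix_mult_bidx_nth)

lemma commutator_B0_B2: "commutator B0 (B2 a b a' b' M) = B1 a' b'"
  by (simp add: commutator_def vec_eq_iff all_bidx matrix_matrix_mult_bidx_nth)

lemma commutator_B1_B2:
  assumes skew: "transpose M = - M"
  shows "commutator (B1 a b) (B2 a b a' b' M)
    = B2 a' b 0 0 0 + B2 a b' 0 0 0 - B1 (cubic_part a b M) (- cubic_part b a (- M))"
proof -
  have "(\<Sum>j\<in>UNIV. x $ j * M $ j $ l) = - (\<Sum>j\<in>UNIV. x $ j * M $ l $ j)" for x l
    using arg_cong[OF skew, of "\<lambda>T. (T *v x) $ l"]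
    by (simp add: matrix_vector_mult_uminus matrix_vector_mult_def transpose_def sum_negf ac_simps)
  from this[THEN arg_cong, of complex_of_real]
  have skew_sum: "(\<Sum>j\<in>UNIV. of_real (x $ j) * of_real (M $ j $ l))
      = - (\<Sum>j\<in>UNIV. of_real (x $ j) * of_real (M $ l $ j) :: complex)" for x l
    by (simp only: of_real_minus of_real_sum of_real_mult)
  show ?thesis
    by (simp add: commutator_def vec_eq_iff all_bidx matrix_matrix_mult_bidx_nth cubic_part_def
        inner_vec_def matrix_vector_mult_def algebra_simps sum_distrib_left sum_distrib_right
        sum.distrib sum_subtractf sum_negf skew_sum)
qed

lemma has_vector_derivative_vec_nth:
  "(f has_vector_derivative f') F \<Longrightarrow> ((\<lambda>w. f w $ i) has_vector_derivative f' $ i) F"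
  by (rule bounded_linear.has_vector_derivative[OF bounded_linear_vec_nth])

lemma has_real_derivative_vec_nth:
  "(f has_vector_derivative f') F \<Longrightarrow> ((\<lambda>w. f w $ i) has_real_derivative f' $ i) F"
  by (simp add: has_real_derivative_iff_has_vector_derivative has_vector_derivative_vec_nth)

lemma has_vector_derivative_vec_nthI:
  assumes "\<And>i. ((\<lambda>w. f w $ i) has_vector_derivative f' $ i) F"
  shows "(f has_vector_derivative f') F"
  using assms unfolding has_vector_derivative_def has_derivative_def
  by (auto intro!: bounded_linear_scaleR_left vec_tendstoI)

lemma has_vector_derivative_matrix_nthI:
  assumes "\<And>i j. ((\<lambda>w. f w $ i $ j) has_vector_derivative f' $ i $ j) F"
  shows "(f has_vector_derivative f') F"
  by (intro has_vector_derivative_vec_nthI assms)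

lemma has_vector_derivative_mscale:
  assumes "(f has_vector_derivative f') (at z within S)"
    and "(F has_vector_derivative F') (at z within S)"
  shows "((\<lambda>w. f w *m F w) has_vector_derivative f z *m F' + f' *m F z) (at z within S)"
  using has_vector_derivative_vec_nth[OF has_vector_derivative_vec_nth[OF assms(2)]]
  by (intro has_vector_derivative_matrix_nthI) (auto intro!: derivative_eq_intros assms(1))

lemma has_vector_derivative_B1:
  assumes "(a has_vector_derivative a') F" "(b has_vector_derivative b') F"
  shows "((\<lambda>w. B1 (a w) (b w)) has_vector_derivative B1 a' b') F"
  apply (rule has_vector_derivative_matrix_nthI)
  subgoal for i j
    by (cases i; cases j) (auto intro!: derivative_eq_intros has_real_derivative_vec_nth assms)
  done

lemma has_vector_derivative_B2:
  assumes "(a has_vector_derivative a') (at z within S)" "(b has_vector_derivative b') (at z within S)"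
    and "(c has_vector_derivative c') (at z within S)" "(d has_vector_derivative d') (at z within S)"
  shows "((\<lambda>w. B2 (a w) (b w) (c w) (d w) M) has_vector_derivative
      B2 a' (b z) 0 0 0 + B2 (a z) b' 0 0 0 + B1 c' (- d')) (at z within S)"
proof -
  have "((\<lambda>w. a w \<bullet> b w) has_real_derivative a z \<bullet> b' + a' \<bullet> b z) (at z within S)"
    using bounded_bilinear.has_vector_derivative[OF bounded_bilinear_inner assms(1,2)]
    by (simp add: has_real_derivative_iff_has_vector_derivative)
  then show ?thesis
    apply (intro has_vector_derivative_matrix_nthI)
    subgoal for i j
      by (cases i; cases j)
        (auto simp: algebra_simps intro!: derivative_eq_intros has_real_derivative_vec_nth assms)
    done
qed

lemma has_vector_derivative_B2_commutator:
  assumes skew: "transpose M = - M"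
    and "(u has_vector_derivative u1 z) (at z within S)" "(v has_vector_derivative v1 z) (at z within S)"
    and "(u1 has_vector_derivative u2) (at z within S)" "(v1 has_vector_derivative v2) (at z within S)"
  shows "((\<lambda>w. B2 (u w) (v w) (u1 w) (v1 w) M) has_vector_derivative
      commutator (B1 (u z) (v z)) (B2 (u z) (v z) (u1 z) (v1 z) M)
      + B1 (u2 + cubic_part (u z) (v z) M) (- (v2 + cubic_part (v z) (u z) (- M))))
    (at z within S)"
  using has_vector_derivative_B2[OF assms(2-5), of M]
  by (rule has_vector_derivative_eq_rhs)
    (simp add: commutator_B1_B2[OF skew] vec_eq_iff all_bidx algebra_simps)

lemma Lax_equation_a:
  fixes \<zeta> :: complex
  assumes skew: "transpose A = - A"
    and du: "(u has_vector_derivative u1 z) (at z within S)"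
    and dv: "(v has_vector_derivative v1 z) (at z within S)"
    and du1: "(u1 has_vector_derivative u2) (at z within S)"
    and dv1: "(v1 has_vector_derivative v2) (at z within S)"
    and ode_u: "u2 + (2 * (u z \<bullet> v z)) *\<^sub>R u z - (u z \<bullet> u z) *\<^sub>R v z
      + (z / 2) *\<^sub>R u z + A *v u z = 0"
    and ode_v: "v2 + (2 * (u z \<bullet> v z)) *\<^sub>R v z - (v z \<bullet> v z) *\<^sub>R u z
      + (z / 2) *\<^sub>R v z - A *v v z = 0"
  shows "((\<lambda>w. (2 * \<zeta>^2 + complex_of_real w) *m B0 + (2 * \<zeta>) *m B1 (u w) (v w)
        + 2 *m B2 (u w) (v w) (u1 w) (v1 w) A)
      has_vector_derivative
        (B0 + commutator (\<zeta> *m B0 + B1 (u z) (v z))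
          ((2 * \<zeta>^2 + complex_of_real z) *m B0 + (2 * \<zeta>) *m B1 (u z) (v z)
            + 2 *m B2 (u z) (v z) (u1 z) (v1 z) A))) (at z within S)"
proof -
  let ?B1 = "B1 (u z) (v z)" and ?B2 = "B2 (u z) (v z) (u1 z) (v1 z) A"
  have "u2 + cubic_part (u z) (v z) A + (z / 2) *\<^sub>R u z = 0"
    using ode_u by (simp add: cubic_part_def algebra_simps)
  moreover have "v2 + cubic_part (v z) (u z) (- A) + (z / 2) *\<^sub>R v z = 0"
    using ode_v by (simp add: cubic_part_def matrix_vector_mult_uminus inner_commute algebra_simps)
  ultimately have dB2: "((\<lambda>w. B2 (u w) (v w) (u1 w) (v1 w) A) has_vector_derivative
      commutator ?B1 ?B2 + B1 (- ((z / 2) *\<^sub>R u z)) ((z / 2) *\<^sub>R v z)) (at z within S)"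
    using has_vector_derivative_B2_commutator[OF skew du dv du1 dv1] by (simp add: add_eq_0_iff2)
  have derivative: "((\<lambda>w. (2 * \<zeta>^2 + complex_of_real w) *m B0 + (2 * \<zeta>) *m B1 (u w) (v w)
        + 2 *m B2 (u w) (v w) (u1 w) (v1 w) A) has_vector_derivative
      B0 + ((2 * \<zeta>) *m B1 (u1 z) (v1 z) + 2 *m commutator ?B1 ?B2
        - complex_of_real z *m B1 (u z) (- v z))) (at z within S)"
    by (rule has_vector_derivative_eq_rhs,
        (rule has_vector_derivative_add has_vector_derivative_mscale has_vector_derivative_const
          has_vector_derivative_B1[OF du dv] dB2 has_vector_derivative_of_real DERIV_ident)+)
      (simp add: vec_eq_iff all_bidx algebra_simps)
  have expansion: "commutator (\<zeta> *m B0 + ?B1)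
      ((2 * \<zeta>^2 + complex_of_real z) *m B0 + (2 * \<zeta>) *m ?B1 + 2 *m ?B2)
    = (2 * \<zeta>) *m B1 (u1 z) (v1 z) + 2 *m commutator ?B1 ?B2
        - complex_of_real z *m B1 (u z) (- v z)"
    by (simp add: commutator_bilinear commutator_self commutator_antisym[of ?B1 B0]
        commutator_B0_B1 commutator_B0_B2 vec_eq_iff all_bidx algebra_simps power2_eq_square)
  show ?thesis
    unfolding expansion by (rule derivative)
qed

lemma Lax_equation_b:
  fixes \<zeta> :: complex
  assumes skew: "transpose A = - A" and "\<zeta> \<noteq> 0"
    and du: "(u has_vector_derivative u1 z) (at z within S)"
    and dv: "(v has_vector_derivative v1 z) (at z within S)"
    and du1: "(u1 has_vector_derivative u2) (at z within S)"
    and dv1: "(v1 has_vector_derivative v2) (at z within S)"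
    and ode_u: "u2 + (2 * (u z \<bullet> v z)) *\<^sub>R u z - (u z \<bullet> u z) *\<^sub>R v z
      + (1 / 2) *\<^sub>R (u z + z *\<^sub>R u1 z) + A *v u z = 0"
    and ode_v: "v2 + (2 * (u z \<bullet> v z)) *\<^sub>R v z - (v z \<bullet> v z) *\<^sub>R u z
      - (1 / 2) *\<^sub>R (v z + z *\<^sub>R v1 z) - A *v v z = 0"
  shows "((\<lambda>w. (2 + complex_of_real w / \<zeta>) *m (\<zeta> *m B0 + B1 (u w) (v w))
        + (2 / \<zeta>) *m B2 (u w) (v w) (u1 w) (v1 w) A)
      has_vector_derivative
        (B0 + commutator (\<zeta> *m B0 + B1 (u z) (v z))
          ((2 + complex_of_real z / \<zeta>) *m (\<zeta> *m B0 + B1 (u z) (v z))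
            + (2 / \<zeta>) *m B2 (u z) (v z) (u1 z) (v1 z) A))) (at z within S)"
proof -
  let ?B1 = "B1 (u z) (v z)" and ?B2 = "B2 (u z) (v z) (u1 z) (v1 z) A"
  have "u2 + cubic_part (u z) (v z) A + (1 / 2) *\<^sub>R (u z + z *\<^sub>R u1 z) = 0"
    using ode_u by (simp add: cubic_part_def algebra_simps)
  moreover have "v2 + cubic_part (v z) (u z) (- A) - (1 / 2) *\<^sub>R (v z + z *\<^sub>R v1 z) = 0"
    using ode_v by (simp add: cubic_part_def matrix_vector_mult_uminus inner_commute algebra_simps)
  ultimately have dB2: "((\<lambda>w. B2 (u w) (v w) (u1 w) (v1 w) A) has_vector_derivative
      commutator ?B1 ?B2
      + B1 (- ((1 / 2) *\<^sub>R (u z + z *\<^sub>R u1 z))) (- ((1 / 2) *\<^sub>R (v z + z *\<^sub>R v1 z))))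
    (at z within S)"
    using has_vector_derivative_B2_commutator[OF skew du dv du1 dv1]
    by (simp add: add_eq_0_iff2 right_minus_eq)
  have derivative: "((\<lambda>w. (2 + complex_of_real w / \<zeta>) *m (\<zeta> *m B0 + B1 (u w) (v w))
        + (2 / \<zeta>) *m B2 (u w) (v w) (u1 w) (v1 w) A) has_vector_derivative
      B0 + (2 *m B1 (u1 z) (v1 z) + (2 / \<zeta>) *m commutator ?B1 ?B2)) (at z within S)"
    by (rule has_vector_derivative_eq_rhs,
        (rule has_vector_derivative_add has_vector_derivative_mscale has_vector_derivative_const
          has_vector_derivative_B1[OF du dv] dB2 has_vector_derivative_of_real
          has_vector_derivative_divide DERIV_ident)+)
      (simp add: \<open>\<zeta> \<noteq> 0\<close> vec_eq_iff all_bidx field_simps)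
  have expansion: "commutator (\<zeta> *m B0 + ?B1)
      ((2 + complex_of_real z / \<zeta>) *m (\<zeta> *m B0 + ?B1) + (2 / \<zeta>) *m ?B2)
    = 2 *m B1 (u1 z) (v1 z) + (2 / \<zeta>) *m commutator ?B1 ?B2"
    using \<open>\<zeta> \<noteq> 0\<close>
    by (simp add: commutator_bilinear commutator_self commutator_antisym[of ?B1 B0]
        commutator_B0_B2 vec_eq_iff all_bidx field_simps)
  show ?thesis
    unfolding expansion by (rule derivative)
qed

theorem mainTheorem10:
  fixes u v u1 v1 u2 v2 :: "real \<Rightarrow> real ^ ('n::finite)"
    and A :: "real ^ 'n ^ 'n" and S :: "real set"
  assumes "open S"
    and skew: "transpose A = - A"
    and du: "\<forall>z\<in>S. (u has_vector_derivative u1 z) (at z)"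
    and du1: "\<forall>z\<in>S. (u1 has_vector_derivative u2 z) (at z)"
    and dv: "\<forall>z\<in>S. (v has_vector_derivative v1 z) (at z)"
    and dv1: "\<forall>z\<in>S. (v1 has_vector_derivative v2 z) (at z)"
  shows
   "((\<forall>z\<in>S.
        u2 z + (2 * (u z \<bullet> v z)) *\<^sub>R u z - (u z \<bullet> u z) *\<^sub>R v z
          + (z / 2) *\<^sub>R u z + A *v u z = 0 \<and>
        v2 z + (2 * (u z \<bullet> v z)) *\<^sub>R v z - (v z \<bullet> v z) *\<^sub>R u z
          + (z / 2) *\<^sub>R v z - A *v v z = 0)
     \<longrightarrow> (\<forall>z\<in>S. \<forall>\<zeta>::complex.
          ((\<lambda>w. (2 * \<zeta>^2 + complex_of_real w) *m B0 + (2 * \<zeta>) *m B1 (u w) (v w)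
                  + 2 *m B2 (u w) (v w) (u1 w) (v1 w) A)
           has_vector_derivative
             (B0 + commutator (\<zeta> *m B0 + B1 (u z) (v z))
                 ((2 * \<zeta>^2 + complex_of_real z) *m B0 + (2 * \<zeta>) *m B1 (u z) (v z)
                  + 2 *m B2 (u z) (v z) (u1 z) (v1 z) A))) (at z)))
  \<and>
    ((\<forall>z\<in>S.
        u2 z + (2 * (u z \<bullet> v z)) *\<^sub>R u z - (u z \<bullet> u z) *\<^sub>R v z
          + (1 / 2) *\<^sub>R (u z + z *\<^sub>R u1 z) + A *v u z = 0 \<and>
        v2 z + (2 * (u z \<bullet> v z)) *\<^sub>R v z - (v z \<bullet> v z) *\<^sub>R u z
          - (1 / 2) *\<^sub>R (v z + z *\<^sub>R v1 z) - A *v v z = 0)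
     \<longrightarrow> (\<forall>z\<in>S. \<forall>\<zeta>::complex. \<zeta> \<noteq> 0 \<longrightarrow>
          ((\<lambda>w. (2 + complex_of_real w / \<zeta>) *m (\<zeta> *m B0 + B1 (u w) (v w))
                  + (2 / \<zeta>) *m B2 (u w) (v w) (u1 w) (v1 w) A)
           has_vector_derivative
             (B0 + commutator (\<zeta> *m B0 + B1 (u z) (v z))
                 ((2 + complex_of_real z / \<zeta>) *m (\<zeta> *m B0 + B1 (u z) (v z))
                  + (2 / \<zeta>) *m B2 (u z) (v z) (u1 z) (v1 z) A))) (at z)))"
  using du du1 dv dv1
  by (auto intro!: Lax_equation_a[OF skew] Lax_equation_b[OF skew])

end
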